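(* Let $f:[0,1]\to[0,\infty)$ be a function that is concave and increasing on $[0,\tfrac12]$ and satisfies $f(x)=f(1-x)$ for all $x\in[0,1]$. Let $k\ge 1$ and let $x_1,\dots,x_k\in[-1,1]$ be real numbers such that $x:=\sum_{i=1}^k x_i\in[-1,1]$. Then \[ f(|x|)\le \sum_{i=1}^k f(|x_i|). \] *)

theory Defs
  imports "HOL-Analysis.Analysis"
begin

end

theory Submission
  imports Defs
begin

(* Let d = dist_to_int, d(x) = min (frac x) (1 - frac x), be the
   distance from x to the nearest integer, and G = f o d.  Then:
   (1) d is subadditive: d(a + b) <= d a + d b, and takes values in [0, 1/2];
   (2) a nonnegative concave increasing function on [0, b] satisfies f w <= f u + f v
       whenever w <= u + v (all in [0, b]), because it lies above its chords from 0;
   hence G is subadditive on all of the reals, and by induction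
   G(x_1 + ... + x_k) <= G x_1 + ... + G x_k.
   (3) For |x| <= 1 the symmetry f t = f (1 - t) gives G x = f |x|.
   Applying (3) to the sum and to every summand turns the subadditivity of G into
   the claimed inequality. *)

lemma concave_above_chord_from_origin:
  fixes f :: "real \<Rightarrow> real"
  assumes conc: "concave_on {0..b} f" and f0: "f 0 \<ge> 0"
    and u: "0 \<le> u" "u \<le> s" and s: "0 < s" "s \<le> b"
  shows "(u / s) * f s \<le> f u"
proof -
  have "(1 - u/s) * f 0 + (u/s) * f s \<le> f ((1 - u/s) *\<^sub>R 0 + (u/s) *\<^sub>R s)"
    by (rule concave_onD[OF conc]) (use u s in \<open>auto simp: field_simps\<close>)
  also have "(1 - u/s) *\<^sub>R 0 + (u/s) *\<^sub>R s = u"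
    using s by simp
  finally have "(1 - u/s) * f 0 + (u/s) * f s \<le> f u" .
  moreover have "0 \<le> (1 - u/s) * f 0"
    using u s f0 by (intro mult_nonneg_nonneg) (auto simp: field_simps)
  ultimately show ?thesis by linarith
qed

text \<open>A concave increasing function on \<open>[0, b]\<close> with \<open>f 0 \<ge> 0\<close> is subadditive in the
  strong form \<open>f w \<le> f u + f v\<close> whenever \<open>w \<le> u + v\<close>: compare both \<open>f u\<close> and \<open>f v\<close>
  with the chord through the point \<open>s = min (u + v) b\<close>.\<close>
lemma concave_mono_subadditive:
  fixes f :: "real \<Rightarrow> real"
  assumes conc: "concave_on {0..b} f" and incr: "mono_on {0..b} f" and f0: "f 0 \<ge> 0"
    and w: "0 \<le> w" "w \<le> b" and u: "0 \<le> u" "u \<le> b" and v: "0 \<le> v" "v \<le> b"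
    and wuv: "w \<le> u + v"
  shows "f w \<le> f u + f v"
proof -
  define s where "s = min (u + v) b"
  show ?thesis
  proof (cases "s = 0")
    case True
    then have "w = 0" "u = 0" "v = 0" using u v w wuv by (auto simp: s_def)
    then show ?thesis using f0 by simp
  next
    case False
    then have s: "0 < s" "s \<le> b" "u \<le> s" "v \<le> s" "w \<le> s"
      using u v w wuv by (auto simp: s_def)
    have fs: "0 \<le> f s"
      using mono_onD[OF incr, of 0 s] f0 s by auto
    have "f w \<le> f s"
      using s w by (auto intro: mono_onD[OF incr])
    also have "f s \<le> ((u + v) / s) * f s"
    proof -
      have "1 \<le> (u + v) / s"
        using s by (simp add: s_def)
      then show ?thesis
        using mult_right_mono[OF _ fs] by fastforce
    qed
    also have "\<dots> = (u / s) * f s + (v / s) * f s"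
      by (simp add: add_divide_distrib distrib_right)
    also have "\<dots> \<le> f u + f v"
      using concave_above_chord_from_origin[OF conc f0] u v s by (meson add_mono)
    finally show ?thesis .
  qed
qed

definition dist_to_int :: "real \<Rightarrow> real" where
  "dist_to_int x = min (frac x) (1 - frac x)"

lemma dist_to_int_bounds: "0 \<le> dist_to_int x" "dist_to_int x \<le> 1/2"
  unfolding dist_to_int_def min_def using frac_ge_0[of x] frac_lt_1[of x] by auto

text \<open>The distance to the nearest integer is subadditive (a triangle inequality in \<open>\<real>/\<int>\<close>).\<close>
lemma dist_to_int_add: "dist_to_int (a + b) \<le> dist_to_int a + dist_to_int b"
proof -
  have "0 \<le> frac a" "frac a < 1" "0 \<le> frac b" "frac b < 1"
    using frac_ge_0 frac_lt_1 by auto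
  then show ?thesis
    unfolding dist_to_int_def frac_add[of a b] by (simp split: if_splits; linarith)
qed

lemma dist_to_int_on_unit:
  assumes "-1 \<le> x" "x \<le> 1"
  shows "dist_to_int x = \<bar>x\<bar> \<or> dist_to_int x = 1 - \<bar>x\<bar>"
proof -
  have "frac x = \<bar>x\<bar> \<or> frac x = 1 - \<bar>x\<bar> \<or> (frac x = 0 \<and> \<bar>x\<bar> = 1)"
  proof (cases "\<bar>x\<bar> = 1")
    case True
    then have "x \<in> \<int>" by (auto simp: abs_if split: if_splits)
    then show ?thesis using True by (simp add: frac_eq_0_iff)
  next
    case False
    show ?thesis
    proof (cases "0 \<le> x")
      case True
      then have "frac x = x" using False assms by (simp add: frac_eq)
      then show ?thesis using True by simp
    next
      case neg: False
      have "frac x = x + 1"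
        by (subst frac_unique_iff) (use neg False assms in auto)
      then show ?thesis using neg by simp
    qed
  qed
  then show ?thesis unfolding dist_to_int_def by (elim disjE) (auto simp: min_def)
qed

lemma subadditive_sum:
  fixes g :: "'b::comm_monoid_add \<Rightarrow> 'c::ordered_comm_monoid_add"
  assumes subadd: "\<And>a b. g (a + b) \<le> g a + g b"
    and "finite A" "A \<noteq> {}"
  shows "g (\<Sum>i\<in>A. h i) \<le> (\<Sum>i\<in>A. g (h i))"
  using assms(2,3)
proof (induction A rule: finite_ne_induct)
  case (singleton x)
  then show ?case by simp
next
  case (insert x F)
  have "g (h x + sum h F) \<le> g (h x) + g (sum h F)" by (rule subadd)
  also have "\<dots> \<le> g (h x) + (\<Sum>i\<in>F. g (h i))" using insert.IH by (rule add_left_mono)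
  finally show ?case using insert.hyps by simp
qed

theorem lemma1:
  fixes f :: "real \<Rightarrow> real" and k :: nat and xs :: "nat \<Rightarrow> real"
  assumes nonneg: "\<forall>t\<in>{0..1}. f t \<ge> 0"
    and conc: "concave_on {0..1/2} f"
    and incr: "mono_on {0..1/2} f"
    and symm: "\<forall>t\<in>{0..1}. f t = f (1 - t)"
    and k: "k \<ge> 1"
    and xs: "\<forall>i\<in>{1..k}. xs i \<in> {-1..1}"
    and sum: "(\<Sum>i=1..k. xs i) \<in> {-1..1}"
  shows "f \<bar>\<Sum>i=1..k. xs i\<bar> \<le> (\<Sum>i=1..k. f \<bar>xs i\<bar>)"
proof -
  define G where "G x = f (dist_to_int x)" for x
  have G_subadd: "G (a + b) \<le> G a + G b" for a b
    unfolding G_def using nonneg dist_to_int_bounds dist_to_int_add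
    by (intro concave_mono_subadditive[OF conc incr]) auto
  have G_unit: "G x = f \<bar>x\<bar>" if "x \<in> {-1..1}" for x
  proof -
    have "f (1 - \<bar>x\<bar>) = f \<bar>x\<bar>"
      using symm that by (metis abs_ge_zero abs_le_iff atLeastAtMost_iff minus_le_iff)
    then show ?thesis
      using dist_to_int_on_unit[of x] that unfolding G_def by auto
  qed
  have "f \<bar>\<Sum>i=1..k. xs i\<bar> = G (\<Sum>i=1..k. xs i)"
    using G_unit[OF sum] by simp
  also have "\<dots> \<le> (\<Sum>i=1..k. G (xs i))"
    using k by (intro subadditive_sum[OF G_subadd]) auto
  also have "\<dots> = (\<Sum>i=1..k. f \<bar>xs i\<bar>)"
    using G_unit xs by (intro sum.cong) auto
  finally show ?thesis .
qed

end
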